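(* Suppose a total preorder $\succeq$ on $\mathcal{Q}_b$ is continuous (with respect to uniform convergence), monotonic, and satisfies the dual independence axiom. Then there exists a continuous linear functional on the Banach space $B((0,1],\Sigma)$ whose restriction to $\mathcal{Q}_b$ is a numerical representation of $\succeq$.
   Context: $\mathcal{Q}_b$ is the set of bounded, nondecreasing, left-continuous functions on $(0,1]$. $\Sigma$ is the algebra of subsets of $(0,1]$ generated by finite unions and intersections of intervals $(a,b]$ with $0<a<b\le1$. A simple function is $\sum_{i=1}^n\alpha_i\mathbf{1}_{A_i}$ with $\alpha_i\in\mathbb{R}$ and disjoint $A_i\in\Sigma$. $B((0,1],\Sigma)$ is the space of bounded functions on $(0,1]$ that are uniform limits of simple functions, with norm $\|\Phi\|=\sup_{0<p\le1}|\Phi(p)|$; it contains $\mathcal{Q}_b$. A total preorder is reflexive, transitive, complete; $\sim,\succ$ are its indifference and strict parts; continuous means the sets $\{\Psi:\Psi\succeq\Phi\}$ and $\{\Psi:\Phi\succeq\Psi\}$ are closed for each $\Phi$. Monotonic: $\Phi(p)\ge\Psi(p)$ for all $p$ implies $\Phi\succeq\Psi$. Dual independence axiom: $\Phi\succ\Psi$ implies $\alpha\Phi+(1-\alpha)\Upsilon\succ\alpha\Psi+(1-\alpha)\Upsilon$ for all $\Upsilon\in\mathcal{Q}_b$, $\alpha\in(0,1)$. $U$ is a numerical representation if $\Phi\succ\Psi\iff U(\Phi)>U(\Psi)$. *)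

theory Defs
  imports "HOL-Analysis.Analysis"
begin

text \<open>Functions on (0,1] are represented as functions real => real that vanish
  outside (0,1].\<close>

definition unit_ioc :: "real set" where
  "unit_ioc = {0<..1}"

definition sup_norm :: "(real \<Rightarrow> real) \<Rightarrow> real" where
  "sup_norm \<Phi> = (SUP p\<in>unit_ioc. \<bar>\<Phi> p\<bar>)"

definition Qb :: "(real \<Rightarrow> real) set" where
  "Qb = {\<Phi>. (\<forall>p. p \<notin> unit_ioc \<longrightarrow> \<Phi> p = 0)
            \<and> (\<exists>M. \<forall>p\<in>unit_ioc. \<bar>\<Phi> p\<bar> \<le> M)
            \<and> mono_on unit_ioc \<Phi>
            \<and> (\<forall>p\<in>unit_ioc. continuous (at_left p) \<Phi>)}"

definition Sigma_alg :: "real set set" where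
  "Sigma_alg = \<Inter>{M. algebra unit_ioc M \<and>
                      {{a<..b} | a b. 0 < a \<and> a < b \<and> b \<le> 1} \<subseteq> M}"

definition simple_fun :: "(real \<Rightarrow> real) \<Rightarrow> bool" where
  "simple_fun \<Phi> \<longleftrightarrow> (\<exists>(n::nat) (\<alpha>::nat \<Rightarrow> real) (A::nat \<Rightarrow> real set).
      (\<forall>i<n. A i \<in> Sigma_alg) \<and>
      (\<forall>i<n. \<forall>j<n. i \<noteq> j \<longrightarrow> A i \<inter> A j = {}) \<and>
      \<Phi> = (\<lambda>p. \<Sum>i<n. \<alpha> i * indicator (A i) p))"

definition Bspace :: "(real \<Rightarrow> real) set" where
  "Bspace = {\<Phi>. (\<forall>p. p \<notin> unit_ioc \<longrightarrow> \<Phi> p = 0)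
            \<and> (\<exists>M. \<forall>p\<in>unit_ioc. \<bar>\<Phi> p\<bar> \<le> M)
            \<and> (\<forall>\<epsilon>>0. \<exists>s. simple_fun s \<and> (\<forall>p\<in>unit_ioc. \<bar>\<Phi> p - s p\<bar> < \<epsilon>))}"

definition total_preorder_on :: "'a set \<Rightarrow> ('a \<Rightarrow> 'a \<Rightarrow> bool) \<Rightarrow> bool" where
  "total_preorder_on S R \<longleftrightarrow>
     (\<forall>x\<in>S. R x x) \<and>
     (\<forall>x\<in>S. \<forall>y\<in>S. \<forall>z\<in>S. R x y \<longrightarrow> R y z \<longrightarrow> R x z) \<and>
     (\<forall>x\<in>S. \<forall>y\<in>S. R x y \<or> R y x)"

definition strict_part :: "('a \<Rightarrow> 'a \<Rightarrow> bool) \<Rightarrow> 'a \<Rightarrow> 'a \<Rightarrow> bool" where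
  "strict_part R x y \<longleftrightarrow> R x y \<and> \<not> R y x"

definition uclosed_in_Qb :: "(real \<Rightarrow> real) set \<Rightarrow> bool" where
  "uclosed_in_Qb T \<longleftrightarrow> (\<forall>\<Psi>\<in>Qb. (\<forall>\<epsilon>>0. \<exists>\<Psi>'\<in>T. sup_norm (\<lambda>p. \<Psi>' p - \<Psi> p) < \<epsilon>) \<longrightarrow> \<Psi> \<in> T)"

definition continuous_pref :: "((real \<Rightarrow> real) \<Rightarrow> (real \<Rightarrow> real) \<Rightarrow> bool) \<Rightarrow> bool" where
  "continuous_pref R \<longleftrightarrow> (\<forall>\<Phi>\<in>Qb.
      uclosed_in_Qb {\<Psi>\<in>Qb. R \<Psi> \<Phi>} \<and> uclosed_in_Qb {\<Psi>\<in>Qb. R \<Phi> \<Psi>})"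

definition monotonic_pref :: "((real \<Rightarrow> real) \<Rightarrow> (real \<Rightarrow> real) \<Rightarrow> bool) \<Rightarrow> bool" where
  "monotonic_pref R \<longleftrightarrow> (\<forall>\<Phi>\<in>Qb. \<forall>\<Psi>\<in>Qb. (\<forall>p\<in>unit_ioc. \<Phi> p \<ge> \<Psi> p) \<longrightarrow> R \<Phi> \<Psi>)"

definition dual_independence :: "((real \<Rightarrow> real) \<Rightarrow> (real \<Rightarrow> real) \<Rightarrow> bool) \<Rightarrow> bool" where
  "dual_independence R \<longleftrightarrow> (\<forall>\<Phi>\<in>Qb. \<forall>\<Psi>\<in>Qb. \<forall>\<Upsilon>\<in>Qb. \<forall>\<alpha>::real. 0 < \<alpha> \<and> \<alpha> < 1 \<longrightarrow>
      strict_part R \<Phi> \<Psi> \<longrightarrow>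
      strict_part R (\<lambda>p. \<alpha> * \<Phi> p + (1 - \<alpha>) * \<Upsilon> p) (\<lambda>p. \<alpha> * \<Psi> p + (1 - \<alpha>) * \<Upsilon> p))"

definition numerical_representation ::
  "((real \<Rightarrow> real) \<Rightarrow> (real \<Rightarrow> real) \<Rightarrow> bool) \<Rightarrow> ((real \<Rightarrow> real) \<Rightarrow> real) \<Rightarrow> bool" where
  "numerical_representation R U \<longleftrightarrow>
     (\<forall>\<Phi>\<in>Qb. \<forall>\<Psi>\<in>Qb. strict_part R \<Phi> \<Psi> \<longleftrightarrow> U \<Phi> > U \<Psi>)"

definition continuous_linear_functional_on_B :: "((real \<Rightarrow> real) \<Rightarrow> real) \<Rightarrow> bool" where
  "continuous_linear_functional_on_B L \<longleftrightarrow>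
     (\<forall>\<Phi>\<in>Bspace. \<forall>\<Psi>\<in>Bspace. L (\<lambda>p. \<Phi> p + \<Psi> p) = L \<Phi> + L \<Psi>) \<and>
     (\<forall>\<Phi>\<in>Bspace. \<forall>c::real. L (\<lambda>p. c * \<Phi> p) = c * L \<Phi>) \<and>
     (\<forall>\<Phi>\<in>Bspace. \<forall>\<epsilon>>0. \<exists>\<delta>>0. \<forall>\<Psi>\<in>Bspace.
        sup_norm (\<lambda>p. \<Psi> p - \<Phi> p) < \<delta> \<longrightarrow> \<bar>L \<Psi> - L \<Phi>\<bar> < \<epsilon>)"

end

theory Submission
  imports Defs
begin

(*
  - The span Qb - Qb of the cone of quantile functions contains the indicators of the
    generating intervals (a,b] = (a,1] - (b,1] and is closed under products, hence contains
    the indicator of every set in the algebra Sigma and every simple function: it is dense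
    in B((0,1],Sigma) for the sup norm.
  - A linear functional on this span that is 1-Lipschitz for the sup norm extends to a
    continuous linear functional on B (take the best lower estimate over approximations).
  - A monotone, additive, positively homogeneous functional U on Qb with U(1) = 1 extends
    linearly to the span by U(Phi - Psi) = U Phi - U Psi, and is 1-Lipschitz there.
  - For R itself, U is the certainty equivalent: constants are strictly ranked by value
    (monotonicity and dual independence), every Phi is indifferent to some constant
    (continuity), and dual independence makes U affine on mixtures, hence additive and
    positively homogeneous.  U represents R, and the extension of U is the functional sought.
*)


section \<open>The domain: constants, sup norm and the cone Qb\<close>

definition const_fn :: "real \<Rightarrow> real \<Rightarrow> real" where
  "const_fn c = (\<lambda>p. if p \<in> unit_ioc then c else 0)"

lemma one_in_unit_ioc: "1 \<in> unit_ioc"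
  unfolding unit_ioc_def by auto

lemma sup_norm_le: "(\<forall>p\<in>unit_ioc. \<bar>f p\<bar> \<le> e) \<Longrightarrow> sup_norm f \<le> e"
  unfolding sup_norm_def using one_in_unit_ioc by (intro cSUP_least) auto

lemma abs_le_sup_norm:
  assumes "\<forall>p\<in>unit_ioc. \<bar>f p\<bar> \<le> M" "p \<in> unit_ioc"
  shows "\<bar>f p\<bar> \<le> sup_norm f"
  unfolding sup_norm_def using assms by (intro cSUP_upper) (auto intro!: bdd_aboveI2[where M=M])

lemma QbI:
  assumes "\<And>p. p \<notin> unit_ioc \<Longrightarrow> f p = 0" "\<And>p. p\<in>unit_ioc \<Longrightarrow> \<bar>f p\<bar> \<le> M"
    "\<And>x y. x \<in> unit_ioc \<Longrightarrow> y \<in> unit_ioc \<Longrightarrow> x \<le> y \<Longrightarrow> f x \<le> f y"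
    "\<And>p. p\<in>unit_ioc \<Longrightarrow> continuous (at_left p) f"
  shows "f \<in> Qb"
  unfolding Qb_def using assms by (auto intro!: mono_onI)

lemma QbD:
  assumes "f \<in> Qb"
  shows "\<And>p. p \<notin> unit_ioc \<Longrightarrow> f p = 0" "\<exists>M. \<forall>p\<in>unit_ioc. \<bar>f p\<bar> \<le> M"
    "\<And>x y. x \<in> unit_ioc \<Longrightarrow> y \<in> unit_ioc \<Longrightarrow> x \<le> y \<Longrightarrow> f x \<le> f y"
    "\<And>p. p\<in>unit_ioc \<Longrightarrow> continuous (at_left p) f"
  using assms unfolding Qb_def by (auto dest: mono_onD)

lemma left_continuous_if_eventually_const:
  "eventually (\<lambda>x. f x = f p) (at_left p) \<Longrightarrow> continuous (at_left p) f"
  by (simp add: continuous_within tendsto_eventually)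

lemma const_fn_Qb: "const_fn c \<in> Qb"
proof (rule QbI[where M="\<bar>c\<bar>"])
  fix p assume p: "p \<in> unit_ioc"
  then have "eventually (\<lambda>x. x \<in> {0<..<p}) (at_left p)"
    unfolding unit_ioc_def by (intro eventually_at_left_real) auto
  then have "eventually (\<lambda>x. const_fn c x = const_fn c p) (at_left p)"
    by eventually_elim (use p in \<open>auto simp: const_fn_def unit_ioc_def\<close>)
  then show "continuous (at_left p) (const_fn c)"
    by (rule left_continuous_if_eventually_const)
qed (auto simp: const_fn_def)

lemma zero_Qb: "(\<lambda>p. 0) \<in> Qb"
  using const_fn_Qb[of 0] by (simp add: const_fn_def)

lemma Qb_nonneg_comb:
  assumes "\<Phi> \<in> Qb" "\<Psi> \<in> Qb" "a \<ge> 0" "b \<ge> 0"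
  shows "(\<lambda>p. a * \<Phi> p + b * \<Psi> p) \<in> Qb"
proof -
  obtain M1 where M1: "\<forall>p\<in>unit_ioc. \<bar>\<Phi> p\<bar> \<le> M1" using QbD(2)[OF assms(1)] by blast
  obtain M2 where M2: "\<forall>p\<in>unit_ioc. \<bar>\<Psi> p\<bar> \<le> M2" using QbD(2)[OF assms(2)] by blast
  show ?thesis
  proof (rule QbI[where M="a*M1+b*M2"])
    fix p assume p: "p \<in> unit_ioc"
    have "\<bar>a * \<Phi> p + b * \<Psi> p\<bar> \<le> a * \<bar>\<Phi> p\<bar> + b * \<bar>\<Psi> p\<bar>"
      using assms by (simp add: abs_triangle_ineq[THEN order_trans] abs_mult)
    also have "\<dots> \<le> a*M1+b*M2" using M1 M2 p assms
      by (intro add_mono mult_left_mono) auto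
    finally show "\<bar>a * \<Phi> p + b * \<Psi> p\<bar> \<le> a*M1+b*M2" .
    show "continuous (at_left p) (\<lambda>p. a * \<Phi> p + b * \<Psi> p)"
      using QbD(4)[OF assms(1) p] QbD(4)[OF assms(2) p] by (intro continuous_intros)
  next
    fix x y assume "x \<in> unit_ioc" "y \<in> unit_ioc" "x \<le> y"
    then show "a * \<Phi> x + b * \<Psi> x \<le> a * \<Phi> y + b * \<Psi> y"
      using QbD(3)[OF assms(1)] QbD(3)[OF assms(2)] assms
      by (intro add_mono mult_left_mono) auto
  qed (use QbD(1)[OF assms(1)] QbD(1)[OF assms(2)] in auto)
qed

lemma Qb_add: "\<Phi> \<in> Qb \<Longrightarrow> \<Psi> \<in> Qb \<Longrightarrow> (\<lambda>p. \<Phi> p + \<Psi> p) \<in> Qb"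
  using Qb_nonneg_comb[of \<Phi> \<Psi> 1 1] by simp

lemma Qb_scale: "\<Phi> \<in> Qb \<Longrightarrow> a \<ge> 0 \<Longrightarrow> (\<lambda>p. a * \<Phi> p) \<in> Qb"
  using Qb_nonneg_comb[OF _ zero_Qb, of \<Phi> a 0] by simp

text \<open>The product of two nonnegative quantile functions is a quantile function; this is what
  makes the span of Qb closed under products, hence under intersections of sets.\<close>

lemma Qb_mult:
  assumes "\<Phi> \<in> Qb" "\<Psi> \<in> Qb" "\<forall>p\<in>unit_ioc. \<Phi> p \<ge> 0" "\<forall>p\<in>unit_ioc. \<Psi> p \<ge> 0"
  shows "(\<lambda>p. \<Phi> p * \<Psi> p) \<in> Qb"
proof -
  obtain M1 where M1: "\<forall>p\<in>unit_ioc. \<bar>\<Phi> p\<bar> \<le> M1" using QbD(2)[OF assms(1)] by blast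
  obtain M2 where M2: "\<forall>p\<in>unit_ioc. \<bar>\<Psi> p\<bar> \<le> M2" using QbD(2)[OF assms(2)] by blast
  show ?thesis
  proof (rule QbI[where M="M1*M2"])
    fix p assume p: "p \<in> unit_ioc"
    show "\<bar>\<Phi> p * \<Psi> p\<bar> \<le> M1*M2" unfolding abs_mult using M1 M2 p
      by (intro mult_mono) auto
    show "continuous (at_left p) (\<lambda>p. \<Phi> p * \<Psi> p)"
      using QbD(4)[OF assms(1) p] QbD(4)[OF assms(2) p] by (intro continuous_intros)
  next
    fix x y assume "x \<in> unit_ioc" "y \<in> unit_ioc" "x \<le> y"
    then show "\<Phi> x * \<Psi> x \<le> \<Phi> y * \<Psi> y"
      using QbD(3)[OF assms(1)] QbD(3)[OF assms(2)] assms
      by (intro mult_mono) auto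
  qed (use QbD(1)[OF assms(1)] in auto)
qed

lemma indicator_Ioc_Qb: "0 \<le> a \<Longrightarrow> indicator {a<..1} \<in> Qb"
proof (rule QbI[where M=1])
  fix p assume p: "p \<in> unit_ioc"
  have "eventually (\<lambda>x. x \<in> {max 0 a<..<p} \<or> p \<le> a \<and> x \<in> {0<..<p}) (at_left p)"
  proof (cases "p \<le> a")
    case True
    then show ?thesis using p unfolding unit_ioc_def
      by (intro eventually_mono[OF eventually_at_left_real[of 0 p]]) auto
  next
    case False
    then show ?thesis using p unfolding unit_ioc_def
      by (intro eventually_mono[OF eventually_at_left_real[of "max 0 a" p]]) auto
  qed
  then have "eventually (\<lambda>x. indicator {a<..1} x = (indicator {a<..1} p :: real)) (at_left p)"
    by eventually_elim (use p in \<open>auto simp: indicator_def unit_ioc_def\<close>)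
  then show "continuous (at_left p) (indicator {a<..1} :: real \<Rightarrow> real)"
    by (rule left_continuous_if_eventually_const)
qed (auto simp: indicator_def unit_ioc_def)


definition mix :: "real \<Rightarrow> (real \<Rightarrow> real) \<Rightarrow> (real \<Rightarrow> real) \<Rightarrow> real \<Rightarrow> real" where
  "mix \<alpha> \<Phi> \<Psi> = (\<lambda>p. \<alpha> * \<Phi> p + (1 - \<alpha>) * \<Psi> p)"

lemma mix_Qb: "\<Phi> \<in> Qb \<Longrightarrow> \<Psi> \<in> Qb \<Longrightarrow> 0 \<le> \<alpha> \<Longrightarrow> \<alpha> \<le> 1 \<Longrightarrow> mix \<alpha> \<Phi> \<Psi> \<in> Qb"
  unfolding mix_def by (rule Qb_nonneg_comb) auto

lemma mix_const_fn: "mix \<alpha> (const_fn a) (const_fn b) = const_fn (\<alpha> * a + (1 - \<alpha>) * b)"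
  unfolding mix_def const_fn_def by auto

lemma sup_norm_const_fn_diff: "sup_norm (\<lambda>p. const_fn a p - const_fn b p) \<le> \<bar>a - b\<bar>"
  by (rule sup_norm_le) (auto simp: const_fn_def)


section \<open>The span Qb - Qb and its density in B\<close>

definition Qb_span :: "(real \<Rightarrow> real) set" where
  "Qb_span = {f. \<exists>\<Phi>\<in>Qb. \<exists>\<Psi>\<in>Qb. f = (\<lambda>p. \<Phi> p - \<Psi> p)}"

lemma Qb_spanI: "\<Phi> \<in> Qb \<Longrightarrow> \<Psi> \<in> Qb \<Longrightarrow> (\<lambda>p. \<Phi> p - \<Psi> p) \<in> Qb_span"
  unfolding Qb_span_def by blast

lemma Qb_spanE:
  assumes "f \<in> Qb_span"
  obtains \<Phi> \<Psi> where "\<Phi> \<in> Qb" "\<Psi> \<in> Qb" "f = (\<lambda>p. \<Phi> p - \<Psi> p)"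
  using assms unfolding Qb_span_def by blast

lemma Qb_subset_span: "\<Phi> \<in> Qb \<Longrightarrow> \<Phi> \<in> Qb_span"
  using Qb_spanI[OF _ zero_Qb, of \<Phi>] by simp

lemma span_zero: "(\<lambda>p. 0) \<in> Qb_span"
  using Qb_subset_span[OF zero_Qb] .

lemma span_add: "f \<in> Qb_span \<Longrightarrow> g \<in> Qb_span \<Longrightarrow> (\<lambda>p. f p + g p) \<in> Qb_span"
proof -
  assume f: "f \<in> Qb_span" and g: "g \<in> Qb_span"
  obtain a b where "a \<in> Qb" "b \<in> Qb" "f = (\<lambda>p. a p - b p)" using f by (rule Qb_spanE)
  moreover obtain c d where "c \<in> Qb" "d \<in> Qb" "g = (\<lambda>p. c p - d p)" using g by (rule Qb_spanE)
  ultimately show ?thesis using Qb_spanI[OF Qb_add[of a c] Qb_add[of b d]] by (simp add: algebra_simps)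
qed

lemma span_scale: "f \<in> Qb_span \<Longrightarrow> (\<lambda>p. c * f p) \<in> Qb_span"
proof -
  assume "f \<in> Qb_span"
  then obtain a b where ab: "a \<in> Qb" "b \<in> Qb" "f = (\<lambda>p. a p - b p)" by (rule Qb_spanE)
  show ?thesis
  proof (cases "c \<ge> 0")
    case True
    then show ?thesis
      using Qb_spanI[OF Qb_scale[of a c] Qb_scale[of b c]] ab by (simp add: algebra_simps)
  next
    case False
    then show ?thesis
      using Qb_spanI[OF Qb_scale[of b "-c"] Qb_scale[of a "-c"]] ab by (simp add: algebra_simps)
  qed
qed

lemma span_diff: "f \<in> Qb_span \<Longrightarrow> g \<in> Qb_span \<Longrightarrow> (\<lambda>p. f p - g p) \<in> Qb_span"
  using span_add[OF _ span_scale, of f g "-1"] by simp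

text \<open>Every element of the span is a difference of nonnegative quantile functions
  (shift both parts up by a common constant).\<close>

lemma span_nonneg_decomp:
  assumes "f \<in> Qb_span"
  obtains \<Phi> \<Psi> where "\<Phi> \<in> Qb" "\<Psi> \<in> Qb" "\<forall>p\<in>unit_ioc. \<Phi> p \<ge> 0 \<and> \<Psi> p \<ge> 0"
    "f = (\<lambda>p. \<Phi> p - \<Psi> p)"
proof -
  obtain a b where ab: "a \<in> Qb" "b \<in> Qb" "f = (\<lambda>p. a p - b p)" using assms by (rule Qb_spanE)
  obtain M1 where M1: "\<forall>p\<in>unit_ioc. \<bar>a p\<bar> \<le> M1" using QbD(2)[OF ab(1)] by blast
  obtain M2 where M2: "\<forall>p\<in>unit_ioc. \<bar>b p\<bar> \<le> M2" using QbD(2)[OF ab(2)] by blast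
  define m where "m = \<bar>M1\<bar> + \<bar>M2\<bar>"
  define A where "A = (\<lambda>p. a p + const_fn m p)"
  define B where "B = (\<lambda>p. b p + const_fn m p)"
  have "A \<in> Qb" "B \<in> Qb"
    unfolding A_def B_def using ab by (auto intro: Qb_add const_fn_Qb)
  moreover have "\<forall>p\<in>unit_ioc. A p \<ge> 0 \<and> B p \<ge> 0"
  proof
    fix p assume p: "p \<in> unit_ioc"
    then have "\<bar>a p\<bar> \<le> M1" "\<bar>b p\<bar> \<le> M2" using M1 M2 by auto
    then show "A p \<ge> 0 \<and> B p \<ge> 0"
      using p unfolding A_def B_def m_def const_fn_def by (simp add: abs_le_iff)
  qed
  moreover have "f = (\<lambda>p. A p - B p)" unfolding ab(3) A_def B_def by simp
  ultimately show ?thesis by (rule that)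
qed

lemma span_mult: "f \<in> Qb_span \<Longrightarrow> g \<in> Qb_span \<Longrightarrow> (\<lambda>p. f p * g p) \<in> Qb_span"
proof -
  assume f: "f \<in> Qb_span" and g: "g \<in> Qb_span"
  obtain a b where ab: "a \<in> Qb" "b \<in> Qb" "\<forall>p\<in>unit_ioc. a p \<ge> 0 \<and> b p \<ge> 0"
    and f_eq: "f = (\<lambda>p. a p - b p)" using span_nonneg_decomp[OF f] by blast
  obtain c d where cd: "c \<in> Qb" "d \<in> Qb" "\<forall>p\<in>unit_ioc. c p \<ge> 0 \<and> d p \<ge> 0"
    and g_eq: "g = (\<lambda>p. c p - d p)" using span_nonneg_decomp[OF g] by blast
  have "(\<lambda>p. (a p * c p + b p * d p) - (a p * d p + b p * c p)) \<in> Qb_span"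
    using ab cd by (intro Qb_spanI Qb_add Qb_mult) auto
  then show ?thesis unfolding f_eq g_eq by (simp add: algebra_simps)
qed

text \<open>The sets whose indicators lie in the span form an algebra containing the generating
  intervals (a,b] = (a,1] - (b,1]; hence it contains the whole algebra Sigma.\<close>

lemma Sigma_alg_indicator_in_span:
  assumes "A \<in> Sigma_alg"
  shows "indicator A \<in> Qb_span"
proof -
  define M where "M = {A. A \<subseteq> unit_ioc \<and> indicator A \<in> Qb_span}"
  have "algebra unit_ioc M"
    unfolding algebra_iff_Un
  proof (intro conjI ballI)
    show "M \<subseteq> Pow unit_ioc" unfolding M_def by auto
    have "indicator {} = (\<lambda>p::real. 0::real)" by (auto simp: indicator_def)
    then show "{} \<in> M" unfolding M_def using span_zero by simp
  next
    fix A assume "A \<in> M"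
    then have A: "A \<subseteq> unit_ioc" "indicator A \<in> Qb_span" unfolding M_def by auto
    have "indicator unit_ioc \<in> Qb_span"
      using Qb_subset_span[OF indicator_Ioc_Qb[of 0]] by (simp add: unit_ioc_def)
    then have "(\<lambda>p. indicator unit_ioc p - indicator A p) \<in> Qb_span" using A by (intro span_diff)
    moreover have "(\<lambda>p. indicator unit_ioc p - indicator A p) = (indicator (unit_ioc - A) :: real \<Rightarrow> real)"
      using A by (intro ext) (auto simp: indicator_def)
    ultimately show "unit_ioc - A \<in> M" unfolding M_def by auto
  next
    fix A B assume "A \<in> M" "B \<in> M"
    then have "(\<lambda>p. indicator A p + indicator B p - indicator A p * indicator B p) \<in> Qb_span"
      unfolding M_def by (intro span_diff span_add span_mult) auto
    then show "A \<union> B \<in> M"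
      using \<open>A \<in> M\<close> \<open>B \<in> M\<close> unfolding M_def by (simp add: indicator_union_arith[abs_def])
  qed
  moreover have "{{a<..b} | a b. 0 < a \<and> a < b \<and> b \<le> 1} \<subseteq> M"
  proof safe
    fix a b :: real assume ab: "0 < a" "a < b" "b \<le> 1"
    have "(\<lambda>p. indicator {a<..1} p - indicator {b<..1} p) \<in> Qb_span"
      using ab by (intro span_diff Qb_subset_span indicator_Ioc_Qb) auto
    moreover have "(\<lambda>p. indicator {a<..1} p - indicator {b<..1} p) = (indicator {a<..b} :: real \<Rightarrow> real)"
      using ab by (intro ext) (auto simp: indicator_def)
    ultimately show "{a<..b} \<in> M" using ab unfolding M_def unit_ioc_def by auto
  qed
  ultimately have "Sigma_alg \<subseteq> M" unfolding Sigma_alg_def by blast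
  then show ?thesis using assms unfolding M_def by blast
qed

lemma simple_fun_in_span: "simple_fun s \<Longrightarrow> s \<in> Qb_span"
proof -
  assume "simple_fun s"
  then obtain n :: nat and \<alpha> :: "nat \<Rightarrow> real" and A :: "nat \<Rightarrow> real set"
    where A: "\<forall>i<n. A i \<in> Sigma_alg" and s: "s = (\<lambda>p. \<Sum>i<n. \<alpha> i * indicator (A i) p)"
    unfolding simple_fun_def by blast
  have "(\<lambda>p. \<Sum>i<m. \<alpha> i * indicator (A i) p) \<in> Qb_span" if "m \<le> n" for m
    using that
  proof (induction m)
    case 0 then show ?case using span_zero by simp
  next
    case (Suc m)
    then show ?case using A by (simp, intro span_add span_scale Sigma_alg_indicator_in_span) auto
  qed
  then show ?thesis using s by simp
qed

lemma Bspace_approx_by_span: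
  assumes "F \<in> Bspace" "e > 0"
  obtains v where "v \<in> Qb_span" "\<forall>p\<in>unit_ioc. \<bar>F p - v p\<bar> \<le> e"
proof -
  obtain s where "simple_fun s" "\<forall>p\<in>unit_ioc. \<bar>F p - s p\<bar> < e"
    using assms unfolding Bspace_def by blast
  then show ?thesis using that[OF simple_fun_in_span] by (meson less_imp_le)
qed


section \<open>Extending a 1-Lipschitz linear functional from the span to B\<close>

lemma continuous_linear_functional_on_BI:
  assumes add: "\<And>F G. F \<in> Bspace \<Longrightarrow> G \<in> Bspace \<Longrightarrow> L (\<lambda>p. F p + G p) = L F + L G"
    and scale: "\<And>F c. F \<in> Bspace \<Longrightarrow> L (\<lambda>p. c * F p) = c * L F"
    and lip: "\<And>F G d. F \<in> Bspace \<Longrightarrow> G \<in> Bspace \<Longrightarrow> \<forall>p\<in>unit_ioc. \<bar>F p - G p\<bar> \<le> d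
                \<Longrightarrow> \<bar>L F - L G\<bar> \<le> d"
  shows "continuous_linear_functional_on_B L"
proof -
  have bound: "\<bar>L G - L F\<bar> \<le> sup_norm (\<lambda>p. G p - F p)"
    if G: "G \<in> Bspace" and F: "F \<in> Bspace" for F G
  proof -
    obtain M1 where M1: "\<forall>p\<in>unit_ioc. \<bar>G p\<bar> \<le> M1" using G unfolding Bspace_def by blast
    obtain M2 where M2: "\<forall>p\<in>unit_ioc. \<bar>F p\<bar> \<le> M2" using F unfolding Bspace_def by blast
    have "\<bar>G p - F p\<bar> \<le> M1 + M2" if "p \<in> unit_ioc" for p
      using M1 M2 that abs_triangle_ineq4[of "G p" "F p"] by fastforce
    then have "\<forall>p\<in>unit_ioc. \<bar>G p - F p\<bar> \<le> sup_norm (\<lambda>p. G p - F p)"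
      using abs_le_sup_norm[of "\<lambda>p. G p - F p" "M1 + M2"] by blast
    then show ?thesis by (rule lip[OF G F])
  qed
  show ?thesis
    unfolding continuous_linear_functional_on_B_def
  proof (intro conjI ballI allI impI)
    fix F :: "real \<Rightarrow> real" and \<epsilon> :: real assume F: "F \<in> Bspace" and "\<epsilon> > 0"
    then show "\<exists>\<delta>>0. \<forall>G\<in>Bspace. sup_norm (\<lambda>p. G p - F p) < \<delta> \<longrightarrow> \<bar>L G - L F\<bar> < \<epsilon>"
      using bound[OF _ F] by (intro exI[of _ \<epsilon>]) (auto intro: order.strict_trans1)
  qed (use add scale in auto)
qed

locale lipschitz_linear_on_span =
  fixes f :: "(real \<Rightarrow> real) \<Rightarrow> real"
  assumes f_add: "v \<in> Qb_span \<Longrightarrow> w \<in> Qb_span \<Longrightarrow> f (\<lambda>p. v p + w p) = f v + f w"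
    and f_scale: "v \<in> Qb_span \<Longrightarrow> f (\<lambda>p. c * v p) = c * f v"
    and f_lip: "v \<in> Qb_span \<Longrightarrow> w \<in> Qb_span \<Longrightarrow> \<forall>p\<in>unit_ioc. \<bar>v p - w p\<bar> \<le> e
                  \<Longrightarrow> \<bar>f v - f w\<bar> \<le> e"
begin

definition extension :: "(real \<Rightarrow> real) \<Rightarrow> real" where
  "extension F = Sup {f v - e | v e. v \<in> Qb_span \<and> (\<forall>p\<in>unit_ioc. \<bar>F p - v p\<bar> \<le> e)}"

lemma extension_approx:
  assumes v: "v \<in> Qb_span" and approx: "\<forall>p\<in>unit_ioc. \<bar>F p - v p\<bar> \<le> e"
  shows "\<bar>extension F - f v\<bar> \<le> e"
proof -
  define S where "S = {f v - e | v e. v \<in> Qb_span \<and> (\<forall>p\<in>unit_ioc. \<bar>F p - v p\<bar> \<le> e)}"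
  have upper: "y \<le> f v + e" if "y \<in> S" for y
  proof -
    obtain w e' where w: "y = f w - e'" "w \<in> Qb_span" "\<forall>p\<in>unit_ioc. \<bar>F p - w p\<bar> \<le> e'"
      using \<open>y \<in> S\<close> unfolding S_def by blast
    have "\<forall>p\<in>unit_ioc. \<bar>w p - v p\<bar> \<le> e + e'"
    proof
      fix p assume "p \<in> unit_ioc"
      then have "\<bar>F p - w p\<bar> \<le> e'" "\<bar>F p - v p\<bar> \<le> e" using w(3) approx by auto
      then show "\<bar>w p - v p\<bar> \<le> e + e'" unfolding abs_le_iff by linarith
    qed
    then have "\<bar>f w - f v\<bar> \<le> e + e'" by (rule f_lip[OF w(2) v])
    then show ?thesis using w(1) by (simp add: abs_le_iff)
  qed
  have mem: "f v - e \<in> S" unfolding S_def using v approx by blast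
  have "f v - e \<le> Sup S" using mem upper by (intro cSup_upper bdd_aboveI)
  moreover have "Sup S \<le> f v + e" using mem upper by (intro cSup_least) auto
  ultimately show ?thesis unfolding extension_def S_def[symmetric] by (simp add: abs_le_iff)
qed

lemma extension_on_span: "v \<in> Qb_span \<Longrightarrow> extension v = f v"
  using extension_approx[of v v 0] by simp

lemma extension_eqI:
  assumes "\<And>\<epsilon>. \<epsilon> > 0 \<Longrightarrow> \<exists>v\<in>Qb_span. (\<forall>p\<in>unit_ioc. \<bar>F p - v p\<bar> \<le> \<epsilon>) \<and> \<bar>x - f v\<bar> \<le> \<epsilon>"
  shows "extension F = x"
proof -
  have "\<bar>extension F - x\<bar> \<le> 0 + \<epsilon>" if "\<epsilon> > 0" for \<epsilon>
  proof -
    obtain v where v: "v \<in> Qb_span" "\<forall>p\<in>unit_ioc. \<bar>F p - v p\<bar> \<le> \<epsilon>/2" "\<bar>x - f v\<bar> \<le> \<epsilon>/2"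
      using assms[of "\<epsilon>/2"] \<open>\<epsilon> > 0\<close> by auto
    then show ?thesis using extension_approx[OF v(1,2)] unfolding abs_le_iff by linarith
  qed
  then show ?thesis using field_le_epsilon[of "\<bar>extension F - x\<bar>" 0] by simp
qed

lemma extension_add:
  assumes F: "F \<in> Bspace" and G: "G \<in> Bspace"
  shows "extension (\<lambda>p. F p + G p) = extension F + extension G"
proof (rule extension_eqI)
  fix \<epsilon> :: real assume "\<epsilon> > 0"
  then obtain v where v: "v \<in> Qb_span" "\<forall>p\<in>unit_ioc. \<bar>F p - v p\<bar> \<le> \<epsilon>/2"
    using Bspace_approx_by_span[OF F, of "\<epsilon>/2"] by auto
  obtain w where w: "w \<in> Qb_span" "\<forall>p\<in>unit_ioc. \<bar>G p - w p\<bar> \<le> \<epsilon>/2"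
    using Bspace_approx_by_span[OF G, of "\<epsilon>/2"] \<open>\<epsilon> > 0\<close> by auto
  have "\<forall>p\<in>unit_ioc. \<bar>(F p + G p) - (v p + w p)\<bar> \<le> \<epsilon>"
  proof
    fix p assume "p \<in> unit_ioc"
    then have "\<bar>F p - v p\<bar> \<le> \<epsilon>/2" "\<bar>G p - w p\<bar> \<le> \<epsilon>/2" using v(2) w(2) by auto
    then show "\<bar>(F p + G p) - (v p + w p)\<bar> \<le> \<epsilon>" unfolding abs_le_iff by linarith
  qed
  moreover have "\<bar>(extension F + extension G) - f (\<lambda>p. v p + w p)\<bar> \<le> \<epsilon>"
    using extension_approx[OF v] extension_approx[OF w] f_add[OF v(1) w(1)]
    unfolding abs_le_iff by linarith
  ultimately show "\<exists>u\<in>Qb_span. (\<forall>p\<in>unit_ioc. \<bar>F p + G p - u p\<bar> \<le> \<epsilon>)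
      \<and> \<bar>extension F + extension G - f u\<bar> \<le> \<epsilon>"
    using span_add[OF v(1) w(1)] by (intro bexI[where x="\<lambda>p. v p + w p"]) auto
qed

lemma extension_scale:
  assumes F: "F \<in> Bspace"
  shows "extension (\<lambda>p. c * F p) = c * extension F"
proof (rule extension_eqI)
  fix \<epsilon> :: real assume "\<epsilon> > 0"
  define \<eta> where "\<eta> = \<epsilon> / (\<bar>c\<bar> + 1)"
  have \<eta>: "\<eta> > 0" "\<bar>c\<bar> * \<eta> \<le> \<epsilon>" unfolding \<eta>_def using \<open>\<epsilon> > 0\<close> by (auto simp: field_simps)
  obtain v where v: "v \<in> Qb_span" "\<forall>p\<in>unit_ioc. \<bar>F p - v p\<bar> \<le> \<eta>"
    using Bspace_approx_by_span[OF F \<eta>(1)] by blast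
  have "\<bar>c * F p - c * v p\<bar> \<le> \<epsilon>" if "p \<in> unit_ioc" for p
  proof -
    have "\<bar>c * F p - c * v p\<bar> = \<bar>c\<bar> * \<bar>F p - v p\<bar>" by (simp add: abs_mult[symmetric] algebra_simps)
    also have "\<dots> \<le> \<bar>c\<bar> * \<eta>" using v(2) that by (intro mult_left_mono) auto
    finally show ?thesis using \<eta>(2) by simp
  qed
  moreover have "\<bar>c * extension F - f (\<lambda>p. c * v p)\<bar> \<le> \<epsilon>"
  proof -
    have "\<bar>c * extension F - f (\<lambda>p. c * v p)\<bar> = \<bar>c\<bar> * \<bar>extension F - f v\<bar>"
      using f_scale[OF v(1)] by (simp add: abs_mult[symmetric] algebra_simps)
    also have "\<dots> \<le> \<bar>c\<bar> * \<eta>" using extension_approx[OF v] by (intro mult_left_mono) auto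
    finally show ?thesis using \<eta>(2) by simp
  qed
  ultimately show "\<exists>u\<in>Qb_span. (\<forall>p\<in>unit_ioc. \<bar>c * F p - u p\<bar> \<le> \<epsilon>)
      \<and> \<bar>c * extension F - f u\<bar> \<le> \<epsilon>"
    using span_scale[OF v(1), of c] by (intro bexI[where x="\<lambda>p. c * v p"]) auto
qed

lemma extension_lip:
  assumes F: "F \<in> Bspace" and G: "G \<in> Bspace" and d: "\<forall>p\<in>unit_ioc. \<bar>F p - G p\<bar> \<le> d"
  shows "\<bar>extension F - extension G\<bar> \<le> d"
proof (rule field_le_epsilon)
  fix \<epsilon> :: real assume "\<epsilon> > 0"
  then obtain v where v: "v \<in> Qb_span" "\<forall>p\<in>unit_ioc. \<bar>F p - v p\<bar> \<le> \<epsilon>/4"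
    using Bspace_approx_by_span[OF F, of "\<epsilon>/4"] by auto
  obtain w where w: "w \<in> Qb_span" "\<forall>p\<in>unit_ioc. \<bar>G p - w p\<bar> \<le> \<epsilon>/4"
    using Bspace_approx_by_span[OF G, of "\<epsilon>/4"] \<open>\<epsilon> > 0\<close> by auto
  have "\<forall>p\<in>unit_ioc. \<bar>v p - w p\<bar> \<le> d + \<epsilon>/2"
  proof
    fix p assume "p \<in> unit_ioc"
    then have "\<bar>F p - v p\<bar> \<le> \<epsilon>/4" "\<bar>G p - w p\<bar> \<le> \<epsilon>/4" "\<bar>F p - G p\<bar> \<le> d"
      using v(2) w(2) d by auto
    then show "\<bar>v p - w p\<bar> \<le> d + \<epsilon>/2" unfolding abs_le_iff by linarith
  qed
  then have "\<bar>f v - f w\<bar> \<le> d + \<epsilon>/2" by (rule f_lip[OF v(1) w(1)])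
  then show "\<bar>extension F - extension G\<bar> \<le> d + \<epsilon>"
    using extension_approx[OF v] extension_approx[OF w] unfolding abs_le_iff by linarith
qed

theorem extension_continuous_linear: "continuous_linear_functional_on_B extension"
  by (intro continuous_linear_functional_on_BI extension_add extension_scale extension_lip)

end


section \<open>Extending a monotone additive functional from the cone Qb to its span\<close>

locale monotone_cone_functional =
  fixes U :: "(real \<Rightarrow> real) \<Rightarrow> real"
  assumes U_add: "\<Phi> \<in> Qb \<Longrightarrow> \<Psi> \<in> Qb \<Longrightarrow> U (\<lambda>p. \<Phi> p + \<Psi> p) = U \<Phi> + U \<Psi>"
    and U_scale: "\<Phi> \<in> Qb \<Longrightarrow> t \<ge> 0 \<Longrightarrow> U (\<lambda>p. t * \<Phi> p) = t * U \<Phi>"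
    and U_mono: "\<Phi> \<in> Qb \<Longrightarrow> \<Psi> \<in> Qb \<Longrightarrow> (\<And>p. p \<in> unit_ioc \<Longrightarrow> \<Psi> p \<le> \<Phi> p) \<Longrightarrow> U \<Psi> \<le> U \<Phi>"
    and U_one: "U (const_fn 1) = 1"
begin

text \<open>Monotonicity plus translation invariance: U is 1-Lipschitz in the sup norm.\<close>

lemma U_shift_le:
  assumes "\<Phi> \<in> Qb" "\<Psi> \<in> Qb" "e \<ge> 0" "\<And>p. p \<in> unit_ioc \<Longrightarrow> \<Phi> p \<le> \<Psi> p + e"
  shows "U \<Phi> \<le> U \<Psi> + e"
proof -
  have const_e: "const_fn e = (\<lambda>p. e * const_fn 1 p)" by (auto simp: const_fn_def)
  have Q: "(\<lambda>p. \<Psi> p + const_fn e p) \<in> Qb" by (rule Qb_add[OF assms(2) const_fn_Qb])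
  have "U \<Phi> \<le> U (\<lambda>p. \<Psi> p + const_fn e p)"
    using assms(4) by (intro U_mono[OF Q assms(1)]) (auto simp: const_fn_def)
  also have "\<dots> = U \<Psi> + e"
    using U_add[OF assms(2) const_fn_Qb, of e] U_scale[OF const_fn_Qb assms(3), of 1] U_one
    unfolding const_e by simp
  finally show ?thesis .
qed

lemma U_diff_well_defined:
  assumes "\<Phi> \<in> Qb" "\<Psi> \<in> Qb" "\<Phi>' \<in> Qb" "\<Psi>' \<in> Qb" "(\<lambda>p. \<Phi> p - \<Psi> p) = (\<lambda>p. \<Phi>' p - \<Psi>' p)"
  shows "U \<Phi> - U \<Psi> = U \<Phi>' - U \<Psi>'"
proof -
  have "(\<lambda>p. \<Phi> p + \<Psi>' p) = (\<lambda>p. \<Phi>' p + \<Psi> p)"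
    using fun_cong[OF assms(5)] by (intro ext) (simp add: algebra_simps)
  then have "U \<Phi> + U \<Psi>' = U \<Phi>' + U \<Psi>" using U_add[OF assms(1,4)] U_add[OF assms(3,2)] by simp
  then show ?thesis by simp
qed

definition span_ext :: "(real \<Rightarrow> real) \<Rightarrow> real" where
  "span_ext f = (SOME y. \<exists>\<Phi>\<in>Qb. \<exists>\<Psi>\<in>Qb. f = (\<lambda>p. \<Phi> p - \<Psi> p) \<and> y = U \<Phi> - U \<Psi>)"

lemma span_ext_diff:
  assumes "\<Phi> \<in> Qb" "\<Psi> \<in> Qb"
  shows "span_ext (\<lambda>p. \<Phi> p - \<Psi> p) = U \<Phi> - U \<Psi>"
proof -
  have "\<exists>\<Phi>'\<in>Qb. \<exists>\<Psi>'\<in>Qb. (\<lambda>p. \<Phi> p - \<Psi> p) = (\<lambda>p. \<Phi>' p - \<Psi>' p)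
          \<and> span_ext (\<lambda>p. \<Phi> p - \<Psi> p) = U \<Phi>' - U \<Psi>'"
    unfolding span_ext_def by (rule someI_ex) (use assms in blast)
  then show ?thesis using U_diff_well_defined[OF assms] by metis
qed

lemma span_ext_Qb: "\<Phi> \<in> Qb \<Longrightarrow> span_ext \<Phi> = U \<Phi>"
  using span_ext_diff[OF _ zero_Qb, of \<Phi>] U_scale[OF zero_Qb, of 0] by simp

lemma span_ext_add:
  assumes "f \<in> Qb_span" "g \<in> Qb_span"
  shows "span_ext (\<lambda>p. f p + g p) = span_ext f + span_ext g"
proof -
  obtain a b where ab: "a \<in> Qb" "b \<in> Qb" "f = (\<lambda>p. a p - b p)" using assms(1) by (rule Qb_spanE)
  obtain c d where cd: "c \<in> Qb" "d \<in> Qb" "g = (\<lambda>p. c p - d p)" using assms(2) by (rule Qb_spanE)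
  have "(\<lambda>p. f p + g p) = (\<lambda>p. (a p + c p) - (b p + d p))"
    unfolding ab(3) cd(3) by (auto simp: algebra_simps)
  then show ?thesis
    using span_ext_diff[OF Qb_add[OF ab(1) cd(1)] Qb_add[OF ab(2) cd(2)]]
      U_add[OF ab(1) cd(1)] U_add[OF ab(2) cd(2)] span_ext_diff[OF ab(1,2)] span_ext_diff[OF cd(1,2)]
    unfolding ab(3) cd(3) by simp
qed

lemma span_ext_scale:
  assumes "f \<in> Qb_span"
  shows "span_ext (\<lambda>p. c * f p) = c * span_ext f"
proof -
  obtain a b where ab: "a \<in> Qb" "b \<in> Qb" "f = (\<lambda>p. a p - b p)" using assms by (rule Qb_spanE)
  show ?thesis
  proof (cases "c \<ge> 0")
    case True
    have "(\<lambda>p. c * f p) = (\<lambda>p. c * a p - c * b p)" unfolding ab(3) by (auto simp: algebra_simps)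
    then show ?thesis
      using span_ext_diff[OF Qb_scale[OF ab(1) True] Qb_scale[OF ab(2) True]]
        U_scale[OF ab(1) True] U_scale[OF ab(2) True] span_ext_diff[OF ab(1,2)]
      unfolding ab(3) by (simp add: right_diff_distrib)
  next
    case False
    then have c: "-c \<ge> 0" by simp
    have "(\<lambda>p. c * f p) = (\<lambda>p. (-c) * b p - (-c) * a p)" unfolding ab(3) by (auto simp: algebra_simps)
    then show ?thesis
      using span_ext_diff[OF Qb_scale[OF ab(2) c] Qb_scale[OF ab(1) c]]
        U_scale[OF ab(1) c] U_scale[OF ab(2) c] span_ext_diff[OF ab(1,2)]
      unfolding ab(3) by (simp add: right_diff_distrib)
  qed
qed

lemma span_ext_lip:
  assumes "f \<in> Qb_span" "g \<in> Qb_span" "\<forall>p\<in>unit_ioc. \<bar>f p - g p\<bar> \<le> e"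
  shows "\<bar>span_ext f - span_ext g\<bar> \<le> e"
proof -
  obtain a b where ab: "a \<in> Qb" "b \<in> Qb" "f = (\<lambda>p. a p - b p)" using assms(1) by (rule Qb_spanE)
  obtain c d where cd: "c \<in> Qb" "d \<in> Qb" "g = (\<lambda>p. c p - d p)" using assms(2) by (rule Qb_spanE)
  have e: "e \<ge> 0" using assms(3) one_in_unit_ioc by force
  have ad: "(\<lambda>p. a p + d p) \<in> Qb" and bc: "(\<lambda>p. b p + c p) \<in> Qb" using ab cd by (auto intro: Qb_add)
  have "\<bar>(a p + d p) - (b p + c p)\<bar> \<le> e" if "p \<in> unit_ioc" for p
    using assms(3) that unfolding ab(3) cd(3) by (simp add: algebra_simps)
  then have "U (\<lambda>p. a p + d p) \<le> U (\<lambda>p. b p + c p) + e"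
    and "U (\<lambda>p. b p + c p) \<le> U (\<lambda>p. a p + d p) + e"
    by (intro U_shift_le ad bc e; force simp: abs_le_iff)+
  then show ?thesis
    using U_add[OF ab(1) cd(2)] U_add[OF ab(2) cd(1)] span_ext_diff[OF ab(1,2)] span_ext_diff[OF cd(1,2)]
    unfolding ab(3) cd(3) by (simp add: abs_le_iff)
qed

sublocale lipschitz_linear_on_span span_ext
  by unfold_locales (auto intro: span_ext_add span_ext_scale span_ext_lip)

theorem extends_to_Bspace:
  "\<exists>L. continuous_linear_functional_on_B L \<and> (\<forall>\<Phi>\<in>Qb. L \<Phi> = U \<Phi>)"
  using extension_continuous_linear extension_on_span[OF Qb_subset_span] span_ext_Qb by metis

end


section \<open>Preferences and their certainty equivalents\<close>

locale nondegenerate_preference =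
  fixes R :: "(real \<Rightarrow> real) \<Rightarrow> (real \<Rightarrow> real) \<Rightarrow> bool"
  assumes preorder: "total_preorder_on Qb R" and continuous: "continuous_pref R"
    and monotonic: "monotonic_pref R" and independence: "dual_independence R"
    and nondegenerate: "\<exists>\<Phi>\<in>Qb. \<exists>\<Psi>\<in>Qb. strict_part R \<Phi> \<Psi>"
begin

lemma pref_trans: "x \<in> Qb \<Longrightarrow> y \<in> Qb \<Longrightarrow> z \<in> Qb \<Longrightarrow> R x y \<Longrightarrow> R y z \<Longrightarrow> R x z"
  using preorder unfolding total_preorder_on_def by blast

lemma pref_total: "x \<in> Qb \<Longrightarrow> y \<in> Qb \<Longrightarrow> R x y \<or> R y x"
  using preorder unfolding total_preorder_on_def by blast

lemma strict_pref_trans1: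
  "x \<in> Qb \<Longrightarrow> y \<in> Qb \<Longrightarrow> z \<in> Qb \<Longrightarrow> strict_part R x y \<Longrightarrow> R y z \<Longrightarrow> strict_part R x z"
  unfolding strict_part_def by (meson pref_trans)

lemma strict_pref_trans2:
  "x \<in> Qb \<Longrightarrow> y \<in> Qb \<Longrightarrow> z \<in> Qb \<Longrightarrow> R x y \<Longrightarrow> strict_part R y z \<Longrightarrow> strict_part R x z"
  unfolding strict_part_def by (meson pref_trans)

lemma pref_mono: "\<Phi> \<in> Qb \<Longrightarrow> \<Psi> \<in> Qb \<Longrightarrow> (\<And>p. p \<in> unit_ioc \<Longrightarrow> \<Psi> p \<le> \<Phi> p) \<Longrightarrow> R \<Phi> \<Psi>"
  using monotonic unfolding monotonic_pref_def by blast

lemma strict_pref_mix: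
  "\<Phi> \<in> Qb \<Longrightarrow> \<Psi> \<in> Qb \<Longrightarrow> \<Upsilon> \<in> Qb \<Longrightarrow> 0 < \<alpha> \<Longrightarrow> \<alpha> < 1 \<Longrightarrow> strict_part R \<Phi> \<Psi>
    \<Longrightarrow> strict_part R (mix \<alpha> \<Phi> \<Upsilon>) (mix \<alpha> \<Psi> \<Upsilon>)"
  using independence unfolding dual_independence_def mix_def by blast

lemma pref_limit_left:
  assumes "\<Phi> \<in> Qb" "\<Psi> \<in> Qb"
    and "\<And>\<epsilon>. \<epsilon> > 0 \<Longrightarrow> \<exists>\<Psi>'\<in>Qb. R \<Psi>' \<Phi> \<and> sup_norm (\<lambda>p. \<Psi>' p - \<Psi> p) < \<epsilon>"
  shows "R \<Psi> \<Phi>"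
proof -
  have "uclosed_in_Qb {\<Psi>\<in>Qb. R \<Psi> \<Phi>}" using continuous assms(1) unfolding continuous_pref_def by blast
  then show ?thesis using assms(2,3) unfolding uclosed_in_Qb_def by blast
qed

lemma pref_limit_right:
  assumes "\<Phi> \<in> Qb" "\<Psi> \<in> Qb"
    and "\<And>\<epsilon>. \<epsilon> > 0 \<Longrightarrow> \<exists>\<Psi>'\<in>Qb. R \<Phi> \<Psi>' \<and> sup_norm (\<lambda>p. \<Psi>' p - \<Psi> p) < \<epsilon>"
  shows "R \<Phi> \<Psi>"
proof -
  have "uclosed_in_Qb {\<Psi>\<in>Qb. R \<Phi> \<Psi>}" using continuous assms(1) unfolding continuous_pref_def by blast
  then show ?thesis using assms(2,3) unfolding uclosed_in_Qb_def by blast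
qed

text \<open>A strict preference \<Phi> \<succ> \<Psi> is squeezed between
  constants M \<succeq> \<Phi> \<succ> \<Psi> \<succeq> -M; mixing M and -M with a suitable constant by dual independence
  produces any two constants c > d.\<close>

lemma const_fn_strict_pref:
  assumes "d < c"
  shows "strict_part R (const_fn c) (const_fn d)"
proof -
  obtain \<Phi> \<Psi> where \<Phi>\<Psi>: "\<Phi> \<in> Qb" "\<Psi> \<in> Qb" "strict_part R \<Phi> \<Psi>" using nondegenerate by blast
  obtain M1 where M1: "\<forall>p\<in>unit_ioc. \<bar>\<Phi> p\<bar> \<le> M1" using QbD(2)[OF \<Phi>\<Psi>(1)] by blast
  obtain M2 where M2: "\<forall>p\<in>unit_ioc. \<bar>\<Psi> p\<bar> \<le> M2" using QbD(2)[OF \<Phi>\<Psi>(2)] by blast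
  define M where "M = \<bar>M1\<bar> + \<bar>M2\<bar> + \<bar>c - d\<bar> + 1"
  have M: "M > 0" "c - d < 2 * M" unfolding M_def using assms by auto
  have "R (const_fn M) \<Phi>"
  proof (rule pref_mono[OF const_fn_Qb \<Phi>\<Psi>(1)])
    fix p assume "p \<in> unit_ioc"
    then show "\<Phi> p \<le> const_fn M p" using M1 unfolding M_def const_fn_def by (force simp: abs_le_iff)
  qed
  moreover have "R \<Psi> (const_fn (-M))"
  proof (rule pref_mono[OF \<Phi>\<Psi>(2) const_fn_Qb])
    fix p assume "p \<in> unit_ioc"
    then show "const_fn (-M) p \<le> \<Psi> p" using M2 unfolding M_def const_fn_def by (force simp: abs_le_iff)
  qed
  ultimately have extremes: "strict_part R (const_fn M) (const_fn (-M))"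
    using \<Phi>\<Psi> by (meson const_fn_Qb strict_pref_trans1 strict_pref_trans2)
  define \<alpha> where "\<alpha> = (c - d) / (2 * M)"
  define x where "x = (c + d) / (2 * (1 - \<alpha>))"
  have \<alpha>: "0 < \<alpha>" "\<alpha> < 1" unfolding \<alpha>_def using M assms by (auto simp: field_simps)
  have "\<alpha> * M = (c - d) / 2" unfolding \<alpha>_def using M by (simp add: field_simps)
  moreover have "(1 - \<alpha>) * x = (c + d) / 2" unfolding x_def using \<alpha> by (simp add: field_simps)
  ultimately have "\<alpha> * M + (1 - \<alpha>) * x = c" "\<alpha> * (-M) + (1 - \<alpha>) * x = d" by simp_all
  then show ?thesis
    using strict_pref_mix[OF const_fn_Qb const_fn_Qb const_fn_Qb \<alpha> extremes, of x]
    by (simp add: mix_const_fn)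
qed

text \<open>Every quantile function is indifferent to some constant (its certainty equivalent):
  the infimum c of the constants t \<succeq> \<Phi> satisfies c \<succeq> \<Phi> and \<Phi> \<succeq> c by continuity.\<close>

lemma certainty_equivalent_exists:
  assumes \<Phi>: "\<Phi> \<in> Qb"
  shows "\<exists>c. R \<Phi> (const_fn c) \<and> R (const_fn c) \<Phi>"
proof -
  obtain M0 where M0: "\<forall>p\<in>unit_ioc. \<bar>\<Phi> p\<bar> \<le> M0" using QbD(2)[OF \<Phi>] by blast
  define M where "M = \<bar>M0\<bar>"
  have bound: "\<Phi> p \<le> M" "- M \<le> \<Phi> p" if "p \<in> unit_ioc" for p
    using M0 that unfolding M_def by (auto simp: abs_le_iff)
  define S where "S = {t. - M \<le> t \<and> t \<le> M \<and> R (const_fn t) \<Phi>}"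
  have "M \<in> S"
    unfolding S_def using pref_mono[OF const_fn_Qb \<Phi>, of M] bound by (auto simp: const_fn_def M_def)
  have bdd: "bdd_below S" unfolding S_def by (rule bdd_belowI[where m="-M"]) auto
  define c where "c = Inf S"
  have c_le: "c \<le> t" if "t \<in> S" for t unfolding c_def using that bdd by (rule cInf_lower)
  have c_bounds: "- M \<le> c" "c \<le> M"
    using \<open>M \<in> S\<close> c_le unfolding c_def by (auto intro!: cInf_greatest simp: S_def)
  have "R (const_fn c) \<Phi>"
  proof (rule pref_limit_left[OF \<Phi> const_fn_Qb])
    fix \<epsilon> :: real assume "\<epsilon> > 0"
    then obtain t where t: "t \<in> S" "t < c + \<epsilon>"
      using cInf_less_iff[OF _ bdd, of "c + \<epsilon>"] \<open>M \<in> S\<close> unfolding c_def by auto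
    then have "sup_norm (\<lambda>p. const_fn t p - const_fn c p) < \<epsilon>"
      using sup_norm_const_fn_diff[of t c] c_le[OF t(1)] by simp
    then show "\<exists>\<Psi>'\<in>Qb. R \<Psi>' \<Phi> \<and> sup_norm (\<lambda>p. \<Psi>' p - const_fn c p) < \<epsilon>"
      using t(1) const_fn_Qb unfolding S_def by blast
  qed
  moreover have "R \<Phi> (const_fn c)"
  proof (cases "c = - M")
    case True
    then show ?thesis using pref_mono[OF \<Phi> const_fn_Qb, of c] bound by (auto simp: const_fn_def)
  next
    case False
    show ?thesis
    proof (rule pref_limit_right[OF \<Phi> const_fn_Qb])
      fix \<epsilon> :: real assume "\<epsilon> > 0"
      define t where "t = max (- M) (c - \<epsilon>/2)"
      have t: "- M \<le> t" "t < c" "t \<le> M" "c - t < \<epsilon>"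
        unfolding t_def using False c_bounds \<open>\<epsilon> > 0\<close> by auto
      then have "t \<notin> S" using c_le by force
      then have "R \<Phi> (const_fn t)" using t pref_total[OF \<Phi> const_fn_Qb] unfolding S_def by auto
      moreover have "sup_norm (\<lambda>p. const_fn t p - const_fn c p) < \<epsilon>"
        using sup_norm_const_fn_diff[of t c] t by simp
      ultimately show "\<exists>\<Psi>'\<in>Qb. R \<Phi> \<Psi>' \<and> sup_norm (\<lambda>p. \<Psi>' p - const_fn c p) < \<epsilon>"
        using const_fn_Qb by blast
    qed
  qed
  ultimately show ?thesis by blast
qed

definition cert_eq :: "(real \<Rightarrow> real) \<Rightarrow> real" where
  "cert_eq \<Phi> = (SOME c. R \<Phi> (const_fn c) \<and> R (const_fn c) \<Phi>)"

lemma cert_eq_indiff: "\<Phi> \<in> Qb \<Longrightarrow> R \<Phi> (const_fn (cert_eq \<Phi>)) \<and> R (const_fn (cert_eq \<Phi>)) \<Phi>"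
  unfolding cert_eq_def by (rule someI_ex[OF certainty_equivalent_exists])

lemma cert_eq_represents:
  assumes \<Phi>: "\<Phi> \<in> Qb" and \<Psi>: "\<Psi> \<in> Qb"
  shows "strict_part R \<Phi> \<Psi> \<longleftrightarrow> cert_eq \<Psi> < cert_eq \<Phi>"
proof (cases "cert_eq \<Psi> < cert_eq \<Phi>")
  case True
  then have "strict_part R (const_fn (cert_eq \<Phi>)) (const_fn (cert_eq \<Psi>))"
    by (rule const_fn_strict_pref)
  then have "strict_part R \<Phi> \<Psi>"
    using cert_eq_indiff[OF \<Phi>] cert_eq_indiff[OF \<Psi>] \<Phi> \<Psi>
    by (meson const_fn_Qb strict_pref_trans1 strict_pref_trans2)
  then show ?thesis using True by simp
next
  case False
  then have "R (const_fn (cert_eq \<Psi>)) (const_fn (cert_eq \<Phi>))"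
    by (intro pref_mono const_fn_Qb) (auto simp: const_fn_def)
  then have "R \<Psi> \<Phi>"
    using cert_eq_indiff[OF \<Phi>] cert_eq_indiff[OF \<Psi>] \<Phi> \<Psi> by (meson const_fn_Qb pref_trans)
  then show ?thesis using False unfolding strict_part_def by simp
qed

lemma cert_eq_le: "\<Phi> \<in> Qb \<Longrightarrow> \<Psi> \<in> Qb \<Longrightarrow> R \<Phi> \<Psi> \<Longrightarrow> cert_eq \<Psi> \<le> cert_eq \<Phi>"
  using cert_eq_represents[of \<Psi> \<Phi>] unfolding strict_part_def by force

lemma cert_eq_eqI: "\<Phi> \<in> Qb \<Longrightarrow> \<Psi> \<in> Qb \<Longrightarrow> R \<Phi> \<Psi> \<Longrightarrow> R \<Psi> \<Phi> \<Longrightarrow> cert_eq \<Phi> = cert_eq \<Psi>"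
  using cert_eq_le[of \<Phi> \<Psi>] cert_eq_le[of \<Psi> \<Phi>] by simp

lemma cert_eq_const_fn: "cert_eq (const_fn c) = c"
  using cert_eq_indiff[OF const_fn_Qb, of c] const_fn_strict_pref
  by (metis linorder_neq_iff strict_part_def)

lemma cert_eq_zero: "cert_eq (\<lambda>p. 0) = 0"
  using cert_eq_const_fn[of 0] by (simp add: const_fn_def[abs_def])

lemma cert_eq_mono:
  "\<Phi> \<in> Qb \<Longrightarrow> \<Psi> \<in> Qb \<Longrightarrow> (\<And>p. p \<in> unit_ioc \<Longrightarrow> \<Psi> p \<le> \<Phi> p) \<Longrightarrow> cert_eq \<Psi> \<le> cert_eq \<Phi>"
  by (intro cert_eq_le pref_mono)

text \<open>Replacing a component of a mixture by an indifferent constant keeps the mixture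
  indifferent: a strict preference either way would be inherited, by dual independence and
  continuity, by the mixtures with slightly shifted constants.\<close>

lemma mix_indifferent_const:
  assumes \<Phi>: "\<Phi> \<in> Qb" and \<Upsilon>: "\<Upsilon> \<in> Qb" and \<alpha>: "0 < \<alpha>" "\<alpha> < 1"
    and indiff: "R \<Phi> (const_fn c)" "R (const_fn c) \<Phi>"
  shows "R (mix \<alpha> \<Phi> \<Upsilon>) (mix \<alpha> (const_fn c) \<Upsilon>) \<and> R (mix \<alpha> (const_fn c) \<Upsilon>) (mix \<alpha> \<Phi> \<Upsilon>)"
proof
  have mix_Q: "mix \<alpha> \<Phi> \<Upsilon> \<in> Qb" "\<And>t. mix \<alpha> (const_fn t) \<Upsilon> \<in> Qb"
    using \<alpha> by (auto intro!: mix_Qb \<Phi> \<Upsilon> const_fn_Qb)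
  have close: "sup_norm (\<lambda>p. mix \<alpha> (const_fn (c + s)) \<Upsilon> p - mix \<alpha> (const_fn c) \<Upsilon> p) < \<epsilon>"
    if "\<alpha> * \<bar>s\<bar> < \<epsilon>" for s \<epsilon>
  proof -
    have "sup_norm (\<lambda>p. mix \<alpha> (const_fn (c + s)) \<Upsilon> p - mix \<alpha> (const_fn c) \<Upsilon> p) \<le> \<alpha> * \<bar>s\<bar>"
      using \<alpha> by (intro sup_norm_le) (auto simp: mix_def const_fn_def abs_mult algebra_simps)
    then show ?thesis using that by simp
  qed
  have small: "\<alpha> * \<bar>\<epsilon> / (2 * \<alpha>)\<bar> < \<epsilon>" "\<epsilon> / (2 * \<alpha>) > 0" if "\<epsilon> > 0" for \<epsilon>
    using that \<alpha> by (auto simp: field_simps)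
  show "R (mix \<alpha> (const_fn c) \<Upsilon>) (mix \<alpha> \<Phi> \<Upsilon>)"
  proof (rule pref_limit_left[OF mix_Q])
    fix \<epsilon> :: real assume "\<epsilon> > 0"
    define \<delta> where "\<delta> = \<epsilon> / (2 * \<alpha>)"
    have "strict_part R (const_fn (c + \<delta>)) \<Phi>"
      using strict_pref_trans1[OF const_fn_Qb const_fn_Qb \<Phi> const_fn_strict_pref indiff(2)]
        small[OF \<open>\<epsilon> > 0\<close>] unfolding \<delta>_def by simp
    then have "strict_part R (mix \<alpha> (const_fn (c + \<delta>)) \<Upsilon>) (mix \<alpha> \<Phi> \<Upsilon>)"
      by (rule strict_pref_mix[OF const_fn_Qb \<Phi> \<Upsilon> \<alpha>])
    moreover have "sup_norm (\<lambda>p. mix \<alpha> (const_fn (c + \<delta>)) \<Upsilon> p - mix \<alpha> (const_fn c) \<Upsilon> p) < \<epsilon>"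
      using close small[OF \<open>\<epsilon> > 0\<close>] unfolding \<delta>_def by blast
    ultimately show "\<exists>\<Psi>'\<in>Qb. R \<Psi>' (mix \<alpha> \<Phi> \<Upsilon>) \<and> sup_norm (\<lambda>p. \<Psi>' p - mix \<alpha> (const_fn c) \<Upsilon> p) < \<epsilon>"
      using mix_Q(2) unfolding strict_part_def by blast
  qed
  show "R (mix \<alpha> \<Phi> \<Upsilon>) (mix \<alpha> (const_fn c) \<Upsilon>)"
  proof (rule pref_limit_right[OF mix_Q])
    fix \<epsilon> :: real assume "\<epsilon> > 0"
    define \<delta> where "\<delta> = - (\<epsilon> / (2 * \<alpha>))"
    have "strict_part R \<Phi> (const_fn (c + \<delta>))"
      using strict_pref_trans2[OF \<Phi> const_fn_Qb const_fn_Qb indiff(1) const_fn_strict_pref]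
        small[OF \<open>\<epsilon> > 0\<close>] unfolding \<delta>_def by simp
    then have "strict_part R (mix \<alpha> \<Phi> \<Upsilon>) (mix \<alpha> (const_fn (c + \<delta>)) \<Upsilon>)"
      by (rule strict_pref_mix[OF \<Phi> const_fn_Qb \<Upsilon> \<alpha>])
    moreover have "sup_norm (\<lambda>p. mix \<alpha> (const_fn (c + \<delta>)) \<Upsilon> p - mix \<alpha> (const_fn c) \<Upsilon> p) < \<epsilon>"
      using close small[OF \<open>\<epsilon> > 0\<close>] unfolding \<delta>_def by (metis abs_minus_cancel)
    ultimately show "\<exists>\<Psi>'\<in>Qb. R (mix \<alpha> \<Phi> \<Upsilon>) \<Psi>' \<and> sup_norm (\<lambda>p. \<Psi>' p - mix \<alpha> (const_fn c) \<Upsilon> p) < \<epsilon>"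
      using mix_Q(2) unfolding strict_part_def by blast
  qed
qed

lemma cert_eq_mix:
  assumes \<Phi>: "\<Phi> \<in> Qb" and \<Psi>: "\<Psi> \<in> Qb" and \<alpha>: "0 < \<alpha>" "\<alpha> < 1"
  shows "cert_eq (mix \<alpha> \<Phi> \<Psi>) = \<alpha> * cert_eq \<Phi> + (1 - \<alpha>) * cert_eq \<Psi>"
proof -
  define a b where "a = cert_eq \<Phi>" and "b = cert_eq \<Psi>"
  have \<alpha>': "0 < 1 - \<alpha>" "1 - \<alpha> < 1" using \<alpha> by auto
  have "cert_eq (mix \<alpha> \<Phi> \<Psi>) = cert_eq (mix \<alpha> (const_fn a) \<Psi>)"
    using mix_indifferent_const[OF \<Phi> \<Psi> \<alpha>, of a] cert_eq_indiff[OF \<Phi>] \<alpha> unfolding a_def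
    by (intro cert_eq_eqI mix_Qb \<Phi> \<Psi> const_fn_Qb) auto
  also have "mix \<alpha> (const_fn a) \<Psi> = mix (1 - \<alpha>) \<Psi> (const_fn a)"
    unfolding mix_def by (auto simp: algebra_simps)
  also have "cert_eq (mix (1 - \<alpha>) \<Psi> (const_fn a)) = cert_eq (mix (1 - \<alpha>) (const_fn b) (const_fn a))"
    using mix_indifferent_const[OF \<Psi> const_fn_Qb \<alpha>', of b] cert_eq_indiff[OF \<Psi>] \<alpha> unfolding b_def
    by (intro cert_eq_eqI mix_Qb \<Psi> const_fn_Qb) auto
  also have "\<dots> = \<alpha> * a + (1 - \<alpha>) * b"
    by (simp add: mix_const_fn cert_eq_const_fn algebra_simps)
  finally show ?thesis unfolding a_def b_def .
qed

lemma cert_eq_scale: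
  assumes \<Phi>: "\<Phi> \<in> Qb" and t: "0 \<le> t"
  shows "cert_eq (\<lambda>p. t * \<Phi> p) = t * cert_eq \<Phi>"
proof -
  have contract: "cert_eq (\<lambda>p. s * \<Psi> p) = s * cert_eq \<Psi>"
    if \<Psi>: "\<Psi> \<in> Qb" and s: "0 \<le> s" "s \<le> 1" for \<Psi> s
  proof -
    consider "s = 0" | "s = 1" | "0 < s" "s < 1" using s by linarith
    then show ?thesis
    proof cases
      case 3
      have "(\<lambda>p. s * \<Psi> p) = mix s \<Psi> (\<lambda>p. 0)" unfolding mix_def by simp
      then show ?thesis using cert_eq_mix[OF \<Psi> zero_Qb 3] cert_eq_zero by simp
    qed (simp_all add: cert_eq_zero)
  qed
  show ?thesis
  proof (cases "t \<le> 1")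
    case False
    have "\<Phi> = (\<lambda>p. (1/t) * (t * \<Phi> p))" using False by auto
    then have "cert_eq \<Phi> = (1/t) * cert_eq (\<lambda>p. t * \<Phi> p)"
      using contract[OF Qb_scale[OF \<Phi> t], of "1/t"] False by simp
    then show ?thesis using False by (simp add: field_simps)
  qed (use contract[OF \<Phi> t] in simp)
qed

lemma cert_eq_add:
  assumes "\<Phi> \<in> Qb" "\<Psi> \<in> Qb"
  shows "cert_eq (\<lambda>p. \<Phi> p + \<Psi> p) = cert_eq \<Phi> + cert_eq \<Psi>"
proof -
  have "(\<lambda>p. \<Phi> p + \<Psi> p) = (\<lambda>p. 2 * mix (1/2) \<Phi> \<Psi> p)"
    unfolding mix_def by (auto simp: algebra_simps)
  then show ?thesis
    using cert_eq_scale[OF mix_Qb[OF assms], of "1/2" 2] cert_eq_mix[OF assms, of "1/2"] by simp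
qed

sublocale monotone_cone_functional cert_eq
  using cert_eq_add cert_eq_scale cert_eq_mono cert_eq_const_fn
  by unfold_locales auto

end


theorem mainTheorem9:
  fixes R :: "(real \<Rightarrow> real) \<Rightarrow> (real \<Rightarrow> real) \<Rightarrow> bool"
  assumes "total_preorder_on Qb R"
    and "continuous_pref R"
    and "monotonic_pref R"
    and "dual_independence R"
  shows "\<exists>L. continuous_linear_functional_on_B L \<and> numerical_representation R L"
proof (cases "\<exists>\<Phi>\<in>Qb. \<exists>\<Psi>\<in>Qb. strict_part R \<Phi> \<Psi>")
  case True
  interpret nondegenerate_preference R by (rule nondegenerate_preference.intro[OF assms True])
  obtain L where L: "continuous_linear_functional_on_B L" and extends: "\<forall>\<Phi>\<in>Qb. L \<Phi> = cert_eq \<Phi>"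
    using extends_to_Bspace by blast
  have "numerical_representation R L"
    using extends cert_eq_represents unfolding numerical_representation_def by simp
  with L show ?thesis by blast
next
  case False
  then have "numerical_representation R (\<lambda>_. 0)"
    unfolding numerical_representation_def by auto
  moreover have "continuous_linear_functional_on_B (\<lambda>_. 0)"
    unfolding continuous_linear_functional_on_B_def by auto
  ultimately show ?thesis by blast
qed

end
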